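(* Let $P\in\mathbb{R}^{n\times n}$ be a row-stochastic matrix that is diagonalizable over $\mathbb{R}$, with real eigenvectors $w_1,\dots,w_n$ forming a basis of $\mathbb{R}^n$, let $r\in\mathbb{R}^n$, $\gamma\in[0,1)$, $V=(I-\gamma P)^{-1}r$, and $1\le k\le n$. Suppose there are indices $i_1,\dots,i_m$ with $m\le k$ such that $r\in\mathrm{span}\{w_{i_1},\dots,w_{i_m}\}$. Then there exists $\Phi^*\in\mathbb{R}^{n\times k}$ with orthonormal columns such that: (i) $\mathrm{span}(r)\subseteq\mathrm{span}(\Phi^* )$; (ii) $\Phi^*$ is a zero of the two-timescale TD vector field $G_{\mathrm{td}}$; (iii) $\Phi^*$ is a zero of the two-timescale latent self-prediction vector field $G_{\mathrm{lat}}$, hence a zero of $G_{\mathrm{td}}+G_{\mathrm{lat}}$ (a stationary point of the joint loss $L_{\mathrm{lat}}+L_{\mathrm{td}}$); and (iv) $\Phi^*\hat V^*(\Phi^* )=V$, i.e. the value function approximation error at $\Phi^*$ is zero.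
   Context: For $\Phi\in\mathbb{R}^{n\times k}$ of full column rank: $F^*(\Phi)=(\Phi^\top\Phi)^{-1}\Phi^\top P\Phi$ and $G_{\mathrm{lat}}(\Phi)=-(\Phi F^*(\Phi)-P\Phi)F^*(\Phi)^\top$ (two-timescale gradient flow of $L_{\mathrm{lat}}(\Phi,F)=\|\Phi F-[P\Phi]_{\mathrm{sg}}\|_F^2$). For $\Phi$ with $\Phi^\top(I-\gamma P)\Phi$ invertible: $\hat V^*(\Phi)=(\Phi^\top(I-\gamma P)\Phi)^{-1}\Phi^\top r$ and $G_{\mathrm{td}}(\Phi)=-(\Phi\hat V^*(\Phi)-r-\gamma P\Phi\hat V^*(\Phi))\hat V^*(\Phi)^\top$ (two-timescale semi-gradient flow of $L_{\mathrm{td}}(\Phi,\hat V)=\|\Phi\hat V-[r+\gamma P\Phi\hat V]_{\mathrm{sg}}\|_2^2$). $[\cdot]_{\mathrm{sg}}$ denotes stop-gradient. $P$, $r$, $V$ are the transition matrix, reward vector and value function of a finite MDP under a fixed policy. *)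

theory Defs
  imports "HOL-Analysis.Analysis"
begin

text \<open>Matrices are HOL-Analysis Cartesian matrices: an n x k matrix is real^'k^'n.\<close>

definition row_stochastic :: "real^'n^'n \<Rightarrow> bool" where
  "row_stochastic P \<longleftrightarrow> (\<forall>i j. 0 \<le> P $ i $ j) \<and> (\<forall>i. (\<Sum>j\<in>UNIV. P $ i $ j) = 1)"

definition outer :: "real^'n \<Rightarrow> real^'k \<Rightarrow> real^'k^'n" where
  "outer u v = (\<chi> i j. u $ i * v $ j)"

definition Fstar :: "real^'n^'n \<Rightarrow> real^'k^'n \<Rightarrow> real^'k^'k" where
  "Fstar P \<Phi> = matrix_inv (transpose \<Phi> ** \<Phi>) ** transpose \<Phi> ** P ** \<Phi>"

definition G_lat :: "real^'n^'n \<Rightarrow> real^'k^'n \<Rightarrow> real^'k^'n" where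
  "G_lat P \<Phi> = - ((\<Phi> ** Fstar P \<Phi> - P ** \<Phi>) ** transpose (Fstar P \<Phi>))"

definition Vhat :: "real^'n^'n \<Rightarrow> real \<Rightarrow> real^'n \<Rightarrow> real^'k^'n \<Rightarrow> real^'k" where
  "Vhat P \<gamma> r \<Phi> = matrix_inv (transpose \<Phi> ** (mat 1 - \<gamma> *\<^sub>R P) ** \<Phi>) *v (transpose \<Phi> *v r)"

definition G_td :: "real^'n^'n \<Rightarrow> real \<Rightarrow> real^'n \<Rightarrow> real^'k^'n \<Rightarrow> real^'k^'n" where
  "G_td P \<gamma> r \<Phi> = - outer (\<Phi> *v Vhat P \<gamma> r \<Phi> - r - \<gamma> *\<^sub>R (P *v (\<Phi> *v Vhat P \<gamma> r \<Phi>)))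
                             (Vhat P \<gamma> r \<Phi>)"

definition value_fun :: "real^'n^'n \<Rightarrow> real \<Rightarrow> real^'n \<Rightarrow> real^'n" where
  "value_fun P \<gamma> r = matrix_inv (mat 1 - \<gamma> *\<^sub>R P) *v r"

end

theory Submission
  imports Defs
begin

text \<open>Take for \<open>\<Phi>\<close> an orthonormal basis of a \<open>k\<close>-dimensional \<open>P\<close>-invariant subspace \<open>W\<close>
  spanned by eigenvectors and containing \<open>r\<close>. Since \<open>\<Phi> \<Phi>\<^sup>T\<close> is the orthogonal projection onto
  \<open>W\<close> and \<open>P W \<subseteq> W\<close>, we get \<open>\<Phi> F\<^sup>*(\<Phi>) = \<Phi> \<Phi>\<^sup>T P \<Phi> = P \<Phi>\<close>, so \<open>G\<^sub>l\<^sub>a\<^sub>t(\<Phi>) = 0\<close>.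
  The map \<open>I - \<gamma> P\<close> is injective (\<open>P\<close> is a sup-norm contraction) and maps \<open>W\<close> into itself, so the
  projected TD equation \<open>\<Phi>\<^sup>T (I - \<gamma> P) \<Phi> v = \<Phi>\<^sup>T r\<close> is uniquely solvable and its residual
  \<open>(I - \<gamma> P) \<Phi> v - r\<close> lies in \<open>W\<close> and is orthogonal to \<open>W\<close>, hence vanishes. This gives both
  \<open>G\<^sub>t\<^sub>d(\<Phi>) = 0\<close> and \<open>\<Phi> v = (I - \<gamma> P)\<^sup>-\<^sup>1 r = V\<close>.\<close>

lemma matrix_inv_right:
  fixes A :: "'a::semiring_1^'n^'n"
  assumes "invertible A"
  shows "A ** matrix_inv A = mat 1"
  using someI_ex[OF assms[unfolded invertible_def]] by (simp add: matrix_inv_def)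

lemma matrix_inv_left:
  fixes A :: "'a::semiring_1^'n^'n"
  assumes "invertible A"
  shows "matrix_inv A ** A = mat 1"
  using someI_ex[OF assms[unfolded invertible_def]] by (simp add: matrix_inv_def)

lemma matrix_inv_mat_1: "matrix_inv (mat 1 :: 'a::semiring_1^'n^'n) = mat 1"
proof -
  have "invertible (mat 1 :: 'a^'n^'n)"
    unfolding invertible_def by (metis matrix_mul_lid)
  then show ?thesis
    using matrix_inv_right by (metis matrix_mul_lid)
qed

lemma discounted_matrix_vector_mult:
  fixes P :: "real^'n^'n"
  shows "(mat 1 - c *\<^sub>R P) *v x = x - c *\<^sub>R (P *v x)"
  by (simp add: matrix_vector_mult_diff_rdistrib scaleR_matrix_vector_assoc)

lemma row_stochastic_discounted_kernel:
  fixes P :: "real^'n^'n"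
  assumes stoch: "row_stochastic P" and "0 \<le> \<gamma>" "\<gamma> < 1"
    and x: "(mat 1 - \<gamma> *\<^sub>R P) *v x = 0"
  shows "x = 0"
proof -
  have x_eq: "x = \<gamma> *\<^sub>R (P *v x)"
    using x by (simp add: discounted_matrix_vector_mult)
  define M where "M = Max (range (\<lambda>i. \<bar>x $ i\<bar>))"
  have M_ge: "\<bar>x $ j\<bar> \<le> M" for j
    unfolding M_def by (rule Max_ge) auto
  have "M \<in> range (\<lambda>i. \<bar>x $ i\<bar>)"
    unfolding M_def by (rule Max_in) auto
  then obtain i where i: "\<bar>x $ i\<bar> = M" by auto
  have "M = \<gamma> * \<bar>\<Sum>j\<in>UNIV. P $ i $ j * x $ j\<bar>"
    using i \<open>0 \<le> \<gamma>\<close> by (subst (asm) x_eq) (simp add: matrix_vector_mult_def abs_mult)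
  also have "\<bar>\<Sum>j\<in>UNIV. P $ i $ j * x $ j\<bar> \<le> (\<Sum>j\<in>UNIV. P $ i $ j * M)"
    using stoch M_ge unfolding row_stochastic_def
    by (intro order.trans[OF sum_abs] sum_mono) (simp add: abs_mult mult_left_mono)
  also have "(\<Sum>j\<in>UNIV. P $ i $ j * M) = M"
    using stoch unfolding row_stochastic_def by (simp add: sum_distrib_right[symmetric])
  finally have "M \<le> \<gamma> * M"
    using \<open>0 \<le> \<gamma>\<close> by (simp add: mult_left_mono)
  with i \<open>\<gamma> < 1\<close> have "M = 0"
    by (metis abs_ge_zero antisym mult_le_cancel_right1 not_le)
  then show ?thesis
    using M_ge by (simp add: vec_eq_iff)
qed

lemma invertible_discounted_row_stochastic:
  fixes P :: "real^'n^'n"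
  assumes "row_stochastic P" "0 \<le> \<gamma>" "\<gamma> < 1"
  shows "invertible (mat 1 - \<gamma> *\<^sub>R P)"
  unfolding invertible_left_inverse matrix_left_invertible_ker
  using row_stochastic_discounted_kernel[OF assms] by blast

lemma span_eigenvectors_invariant:
  fixes A :: "real^'n^'n"
  assumes eig: "\<And>i. i \<in> T \<Longrightarrow> \<exists>c. A *v w i = c *\<^sub>R w i"
    and x: "x \<in> span (w ` T)"
  shows "A *v x \<in> span (w ` T)"
proof -
  have "(*v) A ` w ` T \<subseteq> span (w ` T)"
    using eig by (force intro: span_mul span_base)
  then have "span ((*v) A ` w ` T) \<subseteq> span (w ` T)"
    by (simp add: span_minimal)
  with x show ?thesis
    using span_linear_image[OF matrix_vector_mul_linear, of A "w ` T"] by blast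
qed

lemma invariant_subspace_of_eigenvectors:
  fixes A :: "real^'n^'n" and w :: "'i::finite \<Rightarrow> real^'n"
  assumes eig: "\<And>i. \<exists>c. A *v w i = c *\<^sub>R w i"
    and "inj w" "independent (range w)"
    and "card S \<le> d" "d \<le> CARD('i)"
    and r: "r \<in> span (w ` S)"
  obtains W where "subspace W" "dim W = d" "r \<in> W" "\<And>x. x \<in> W \<Longrightarrow> A *v x \<in> W"
proof -
  have "d - card S \<le> card (UNIV - S)"
    using assms by (simp add: card_Diff_subset)
  then obtain U where U: "U \<subseteq> UNIV - S" "card U = d - card S"
    using obtain_subset_with_card_n by metis
  define T where "T = S \<union> U"
  have "card T = d"
    unfolding T_def using U \<open>card S \<le> d\<close> by (subst card_Un_disjoint) auto
  moreover have "card (w ` T) = card T"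
    using \<open>inj w\<close> by (simp add: card_image inj_on_subset)
  moreover have "independent (w ` T)"
    using \<open>independent (range w)\<close> by (rule independent_mono) auto
  ultimately have "dim (span (w ` T)) = d"
    using dim_span_eq_card_independent by metis
  moreover have "r \<in> span (w ` T)"
    using r span_mono[of "w ` S" "w ` T"] unfolding T_def by blast
  ultimately show thesis
    using that[of "span (w ` T)"] span_eigenvectors_invariant[of T A w] eig by auto
qed

lemma orthonormal_matrix_spanning:
  fixes W :: "(real^'n) set"
  assumes "subspace W" "dim W = CARD('k)"
  obtains \<Phi> :: "real^'k^'n" where "transpose \<Phi> ** \<Phi> = mat 1" "span (columns \<Phi>) = W"
proof -
  obtain B where B: "pairwise orthogonal B" "\<And>x. x \<in> B \<Longrightarrow> norm x = 1"
      "independent B" "card B = dim W" "span B = W"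
    using orthonormal_basis_subspace[OF \<open>subspace W\<close>] by metis
  obtain f where f: "bij_betw f (UNIV :: 'k set) B"
    using B(3-4) assms(2) independent_imp_finite bij_betw_iff_card[of "UNIV :: 'k set" B] by auto
  define \<Phi> :: "real^'k^'n" where "\<Phi> = (\<chi> i j. f j $ i)"
  have "columns \<Phi> = B"
    using f unfolding columns_def column_def \<Phi>_def by (simp add: bij_betw_def full_SetCompr_eq)
  moreover have "(transpose \<Phi> ** \<Phi>) $ a $ b = mat 1 $ a $ b" for a b :: 'k
  proof -
    have "f a \<in> B" "f b \<in> B" "f a = f b \<longleftrightarrow> a = b"
      using f by (auto simp: bij_betw_def inj_on_def)
    then have "f a \<bullet> f b = (if a = b then 1 else 0)"
      using B(1,2) by (auto simp: pairwise_def orthogonal_def dot_square_norm)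
    then show ?thesis
      unfolding \<Phi>_def by (simp add: matrix_matrix_mult_def transpose_def inner_vec_def mat_def)
  qed
  ultimately show thesis
    using that[of \<Phi>] B(5) by (simp add: vec_eq_iff)
qed

lemma orthonormal_columns_projection:
  fixes \<Phi> :: "real^'k^'n"
  assumes orth: "transpose \<Phi> ** \<Phi> = mat 1" and "z \<in> span (columns \<Phi>)"
  shows "\<Phi> *v (transpose \<Phi> *v z) = z"
  using \<open>z \<in> span (columns \<Phi>)\<close>
proof (induction rule: span_induct)
  case base
  show ?case unfolding subspace_def
    by (simp add: matrix_vector_right_distrib matrix_vector_mult_scaleR del: transpose_matrix_vector)
next
  case (step x)
  then obtain j where "x = \<Phi> *v axis j 1"
    unfolding columns_def by (auto simp: matrix_vector_mult_basis)
  then show ?case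
    by (simp add: matrix_vector_mul_assoc orth del: transpose_matrix_vector)
qed

lemma orthonormal_columns_orthogonal_eq_0:
  fixes \<Phi> :: "real^'k^'n"
  assumes "transpose \<Phi> ** \<Phi> = mat 1" "z \<in> span (columns \<Phi>)" "transpose \<Phi> *v z = 0"
  shows "z = 0"
  using orthonormal_columns_projection[OF assms(1,2)] assms(3) by simp

lemma Fstar_invariant_columns:
  fixes P :: "real^'n^'n" and \<Phi> :: "real^'k^'n"
  assumes orth: "transpose \<Phi> ** \<Phi> = mat 1"
    and inv: "\<And>x. x \<in> span (columns \<Phi>) \<Longrightarrow> P *v x \<in> span (columns \<Phi>)"
  shows "\<Phi> ** Fstar P \<Phi> = P ** \<Phi>"
  unfolding matrix_eq
proof
  fix y
  have "P *v (\<Phi> *v y) \<in> span (columns \<Phi>)"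
    using inv matrix_vector_mult_in_columnspace by blast
  then show "(\<Phi> ** Fstar P \<Phi>) *v y = (P ** \<Phi>) *v y"
    unfolding Fstar_def orth matrix_inv_mat_1
    by (simp add: matrix_vector_mul_assoc[symmetric] orthonormal_columns_projection[OF orth]
        del: transpose_matrix_vector)
qed

lemma galerkin_matrix_invertible:
  fixes A :: "real^'n^'n" and \<Phi> :: "real^'k^'n"
  assumes orth: "transpose \<Phi> ** \<Phi> = mat 1"
    and inv: "\<And>x. x \<in> span (columns \<Phi>) \<Longrightarrow> A *v x \<in> span (columns \<Phi>)"
    and ker: "\<And>x. A *v x = 0 \<Longrightarrow> x = 0"
  shows "invertible (transpose \<Phi> ** A ** \<Phi>)"
  unfolding invertible_left_inverse matrix_left_invertible_ker
proof (intro allI impI)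
  fix y
  assume "(transpose \<Phi> ** A ** \<Phi>) *v y = 0"
  then have "transpose \<Phi> *v (A *v (\<Phi> *v y)) = 0"
    by (simp add: matrix_vector_mul_assoc matrix_mul_assoc del: transpose_matrix_vector)
  then have "\<Phi> *v y = 0"
    using orthonormal_columns_orthogonal_eq_0[OF orth] inv ker matrix_vector_mult_in_columnspace
    by blast
  then have "transpose \<Phi> *v (\<Phi> *v y) = 0" by simp
  then show "y = 0"
    by (simp add: matrix_vector_mul_assoc orth del: transpose_matrix_vector)
qed

lemma galerkin_solution_exact:
  fixes A :: "real^'n^'n" and \<Phi> :: "real^'k^'n"
  assumes orth: "transpose \<Phi> ** \<Phi> = mat 1"
    and inv: "\<And>x. x \<in> span (columns \<Phi>) \<Longrightarrow> A *v x \<in> span (columns \<Phi>)"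
    and M: "invertible (transpose \<Phi> ** A ** \<Phi>)"
    and b: "b \<in> span (columns \<Phi>)"
  shows "A *v (\<Phi> *v (matrix_inv (transpose \<Phi> ** A ** \<Phi>) *v (transpose \<Phi> *v b))) = b"
    (is "A *v (\<Phi> *v ?v) = b")
proof -
  have "(transpose \<Phi> ** A ** \<Phi>) *v ?v = transpose \<Phi> *v b"
    using matrix_inv_right[OF M] by (simp add: matrix_vector_mul_assoc)
  then have "transpose \<Phi> *v (A *v (\<Phi> *v ?v) - b) = 0"
    by (simp add: matrix_vector_mul_assoc matrix_mul_assoc matrix_vector_mult_diff_distrib
        del: transpose_matrix_vector)
  moreover have "A *v (\<Phi> *v ?v) - b \<in> span (columns \<Phi>)"
    using inv b matrix_vector_mult_in_columnspace by (blast intro: span_diff)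
  ultimately show ?thesis
    using orthonormal_columns_orthogonal_eq_0[OF orth] by fastforce
qed

theorem proposition5:
  fixes P :: "real^'n^'n" and r :: "real^'n" and \<gamma> :: real
    and w :: "'n \<Rightarrow> real^'n" and S :: "'n set"
  assumes stoch: "row_stochastic P"
    and eig: "\<forall>i. \<exists>c::real. P *v w i = c *\<^sub>R w i"
    and basis: "inj w" "independent (range w)" "span (range w) = UNIV"
    and gamma: "0 \<le> \<gamma>" "\<gamma> < 1"
    and k: "CARD('k) \<le> CARD('n)"
    and m: "card S \<le> CARD('k)"
    and r_span: "r \<in> span (w ` S)"
  shows "\<exists>\<Phi> :: real^'k^'n.
           transpose \<Phi> ** \<Phi> = mat 1 \<and>
           span {r} \<subseteq> span (columns \<Phi>) \<and>
           invertible (transpose \<Phi> ** (mat 1 - \<gamma> *\<^sub>R P) ** \<Phi>) \<and>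
           G_td P \<gamma> r \<Phi> = 0 \<and>
           G_lat P \<Phi> = 0 \<and>
           G_td P \<gamma> r \<Phi> + G_lat P \<Phi> = 0 \<and>
           \<Phi> *v Vhat P \<gamma> r \<Phi> = value_fun P \<gamma> r"
proof -
  obtain W where W: "subspace W" "dim W = CARD('k)" "r \<in> W" "\<And>x. x \<in> W \<Longrightarrow> P *v x \<in> W"
    using invariant_subspace_of_eigenvectors[of P w S "CARD('k)" r] eig basis(1,2) k m r_span
    by metis
  obtain \<Phi> :: "real^'k^'n" where orth: "transpose \<Phi> ** \<Phi> = mat 1" and cols: "span (columns \<Phi>) = W"
    using orthonormal_matrix_spanning[OF W(1,2)] by metis
  define A where "A = mat 1 - \<gamma> *\<^sub>R P"
  have inv_A: "A *v x \<in> span (columns \<Phi>)" if "x \<in> span (columns \<Phi>)" for x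
    using that W cols by (simp add: A_def discounted_matrix_vector_mult subspace_diff subspace_mul)
  have M: "invertible (transpose \<Phi> ** A ** \<Phi>)"
    using galerkin_matrix_invertible[OF orth inv_A] row_stochastic_discounted_kernel[OF stoch gamma]
    unfolding A_def by blast
  define v where "v = Vhat P \<gamma> r \<Phi>"
  have resid: "A *v (\<Phi> *v v) = r"
    using galerkin_solution_exact[OF orth inv_A M] W(3) cols unfolding v_def Vhat_def A_def by blast
  then have "\<Phi> *v v - r - \<gamma> *\<^sub>R (P *v (\<Phi> *v v)) = 0"
    unfolding A_def discounted_matrix_vector_mult by auto
  then have "G_td P \<gamma> r \<Phi> = 0"
    unfolding G_td_def v_def[symmetric] outer_def by (simp add: vec_eq_iff)
  moreover have "G_lat P \<Phi> = 0"
    using Fstar_invariant_columns[OF orth] W(4) cols unfolding G_lat_def by simp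
  moreover have "\<Phi> *v v = value_fun P \<gamma> r"
    using matrix_inv_left[OF invertible_discounted_row_stochastic[OF stoch gamma]]
    unfolding value_fun_def resid[unfolded A_def, symmetric]
    by (metis matrix_vector_mul_assoc matrix_vector_mul_lid)
  moreover have "span {r} \<subseteq> span (columns \<Phi>)"
    using W(1,3) cols by (simp add: span_minimal)
  ultimately show ?thesis
    using orth M unfolding A_def v_def by auto
qed

end
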